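(* Let $\mathcal{M}$ be a finite (or countable) set of models with target probability mass function $p(\cdot\mid\boldsymbol{y})$ on $\mathcal{M}$. Let $q_S(\mathcal{S}\mid\mathfrak{m})$ be a probability mass function over populations $\mathcal{S}$ given a model $\mathfrak{m}$, $q_o(\mathfrak{m}_k\mid\mathcal{S},\mathfrak{m})$ a probability mass function over models given a population and a model, and $q_r(\mathfrak{m}'\mid\mathcal{S},\mathfrak{m}_k)$ a probability mass function over models given a population and a model. Assume $\mathfrak{m}\sim p(\cdot\mid\boldsymbol{y})$ and that $(\mathcal{S}',\mathfrak{m}_k',\mathfrak{m}')$ is generated according to $q_S(\mathcal{S}'\mid\mathfrak{m})\,q_o(\mathfrak{m}_k'\mid\mathcal{S}',\mathfrak{m})\,q_r(\mathfrak{m}'\mid\mathcal{S}',\mathfrak{m}_k')$. Assume further that $(\mathcal{S},\mathfrak{m}_k)$ is generated according to $q_S(\mathcal{S}\mid\mathfrak{m}')\,q_o(\mathfrak{m}_k\mid\mathcal{S},\mathfrak{m}')$. Put \[ \mathfrak{m}^*=\begin{cases}\mathfrak{m}' & \text{with probability } \min\{1,a_{mh}\},\\ \mathfrak{m} & \text{otherwise,}\end{cases} \qquad a_{mh}=\frac{p(\mathfrak{m}'\mid\boldsymbol{y})\,q_r(\mathfrak{m}\mid\mathcal{S},\mathfrak{m}_k)}{p(\mathfrak{m}\mid\boldsymbol{y})\,q_r(\mathfrak{m}'\mid\mathcal{S}',\mathfrak{m}_k')}. \] Then $\mathfrak{m}^*\sim p(\cdot\mid\boldsymbol{y})$.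
   Context: This is the reversible genetically modified mode jumping MCMC (RGMJMCMC) step: from the current model $\mathfrak{m}$ a new population (search space of features) $\mathcal{S}'$ is proposed, a local MCMC/optimization within the models induced by $\mathcal{S}'$ yields $\mathfrak{m}_k'$, a randomization yields the proposal $\mathfrak{m}'$, and backward auxiliary variables $(\mathcal{S},\mathfrak{m}_k)$ are generated from $\mathfrak{m}'$. The target $p(\mathfrak{m}\mid\boldsymbol{y})$ is the posterior model probability. *)

theory Defs
  imports "HOL-Probability.Probability"
begin

text \<open>Models have type 'm (any type; the support of a pmf is countable),
populations have type 's.  The target is the pmf post (posterior p(.|y)).\<close>

definition a_mh :: "'m pmf \<Rightarrow> ('s \<Rightarrow> 'm \<Rightarrow> 'm pmf) \<Rightarrow> 'm \<Rightarrow> 's \<Rightarrow> 'm \<Rightarrow> 'm \<Rightarrow> 's \<Rightarrow> 'm \<Rightarrow> real" where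
  "a_mh post qr m S' mk' m' S mk =
     (pmf post m' * pmf (qr S mk) m) / (pmf post m * pmf (qr S' mk') m')"

definition rgmjmcmc_step ::
  "'m pmf \<Rightarrow> ('m \<Rightarrow> 's pmf) \<Rightarrow> ('s \<Rightarrow> 'm \<Rightarrow> 'm pmf) \<Rightarrow> ('s \<Rightarrow> 'm \<Rightarrow> 'm pmf) \<Rightarrow> 'm pmf" where
  "rgmjmcmc_step post qS qo qr =
     do { m \<leftarrow> post;
          S' \<leftarrow> qS m;
          mk' \<leftarrow> qo S' m;
          m' \<leftarrow> qr S' mk';
          S \<leftarrow> qS m';
          mk \<leftarrow> qo S m';
          b \<leftarrow> bernoulli_pmf (min 1 (a_mh post qr m S' mk' m' S mk));
          return_pmf (if b then m' else m) }"

end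

theory Submission
  imports Defs
begin

text \<open>Write t = (m, S', mk', m', S, mk) for the whole forward-and-backward trajectory and J for
its joint law.  Accepting m' amounts to replacing t by its swap (m', S, mk, m, S', mk'), an
involution.  With P and Q the numerator and denominator of a_mh, J t * min 1 (a_mh at t) equals
(product of the qS and qo factors) * min P Q, which is invariant under the swap: detailed balance
for an involutive proposal.  Hence the accept/reject step preserves J, and the first marginal of J
is the target.\<close>

lemma pmf_bind_Pair:
  "pmf (bind_pmf M (\<lambda>x. map_pmf (Pair x) (N x))) (x, y) = pmf M x * pmf (N x) y"
proof -
  have "pmf (map_pmf (Pair x') (N x')) (x, y) = indicator {x} x' * pmf (N x) y" for x'
    by (cases "x' = x") (auto simp: pmf_map_inj' inj_def pmf_eq_0_set_pmf)
  then show ?thesis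
    by (simp add: pmf_bind measure_pmf_single)
qed

lemma pmf_map_bernoulli_if:
  assumes "0 \<le> p" "p \<le> 1"
  shows "pmf (map_pmf (\<lambda>b. if b then u else v) (bernoulli_pmf p)) x
           = p * indicator {x} u + (1 - p) * indicator {x} v"
  using assms by (simp add: map_pmf_def pmf_bind)

lemma bind_accept_reject_involution:
  fixes J :: "'a pmf" and \<sigma> :: "'a \<Rightarrow> 'a" and \<alpha> :: "'a \<Rightarrow> real"
  assumes involution: "\<And>t. \<sigma> (\<sigma> t) = t"
    and nonneg: "\<And>t. 0 \<le> \<alpha> t" and le_1: "\<And>t. \<alpha> t \<le> 1"
    and balance: "\<And>t. pmf J t * \<alpha> t = pmf J (\<sigma> t) * \<alpha> (\<sigma> t)"
  shows "bind_pmf J (\<lambda>t. map_pmf (\<lambda>b. if b then \<sigma> t else t) (bernoulli_pmf (\<alpha> t))) = J"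
proof (rule pmf_eqI)
  fix x
  define f where "f t = \<alpha> t * indicator {x} (\<sigma> t) + (1 - \<alpha> t) * indicator {x} t" for t
  have support: "t \<in> {x, \<sigma> x}" if "f t \<noteq> 0" for t
    using that involution[of t] unfolding f_def by (cases "\<sigma> t = x"; cases "t = x") auto
  have "pmf (bind_pmf J (\<lambda>t. map_pmf (\<lambda>b. if b then \<sigma> t else t) (bernoulli_pmf (\<alpha> t)))) x
          = (\<integral>t. f t \<partial>measure_pmf J)"
    by (simp add: pmf_bind pmf_map_bernoulli_if nonneg le_1 f_def)
  also have "\<dots> = (\<Sum>t\<in>{x, \<sigma> x}. f t * pmf J t)"
    by (rule integral_measure_pmf_real) (auto dest: support)
  also have "\<dots> = pmf J x"
    using balance[of x] involution[of x] by (cases "\<sigma> x = x") (auto simp: f_def algebra_simps)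
  finally show "pmf (bind_pmf J (\<lambda>t. map_pmf (\<lambda>b. if b then \<sigma> t else t) (bernoulli_pmf (\<alpha> t)))) x
                  = pmf J x" .
qed

text \<open>Also valid for P = 0, where Q / P = 0: this covers a vanishing denominator of a_mh.\<close>
lemma mult_min_one_divide:
  fixes P Q :: real
  assumes "0 \<le> P" "0 \<le> Q"
  shows "P * min 1 (Q / P) = min P Q"
  using assms by (cases "P = 0") (auto simp: min_def field_simps)

definition rgmjmcmc_joint ::
  "'m pmf \<Rightarrow> ('m \<Rightarrow> 's pmf) \<Rightarrow> ('s \<Rightarrow> 'm \<Rightarrow> 'm pmf) \<Rightarrow> ('s \<Rightarrow> 'm \<Rightarrow> 'm pmf)
     \<Rightarrow> ('m \<times> 's \<times> 'm \<times> 'm \<times> 's \<times> 'm) pmf" where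
  "rgmjmcmc_joint post qS qo qr =
     post \<bind> (\<lambda>m. map_pmf (Pair m) (
     qS m \<bind> (\<lambda>S'. map_pmf (Pair S') (
     qo S' m \<bind> (\<lambda>mk'. map_pmf (Pair mk') (
     qr S' mk' \<bind> (\<lambda>m'. map_pmf (Pair m') (
     qS m' \<bind> (\<lambda>S. map_pmf (Pair S) (
     qo S m'))))))))))"

definition rgmjmcmc_swap :: "'m \<times> 's \<times> 'm \<times> 'm \<times> 's \<times> 'm \<Rightarrow> 'm \<times> 's \<times> 'm \<times> 'm \<times> 's \<times> 'm" where
  "rgmjmcmc_swap = (\<lambda>(m, S', mk', m', S, mk). (m', S, mk, m, S', mk'))"

definition rgmjmcmc_accept ::
  "'m pmf \<Rightarrow> ('s \<Rightarrow> 'm \<Rightarrow> 'm pmf) \<Rightarrow> 'm \<times> 's \<times> 'm \<times> 'm \<times> 's \<times> 'm \<Rightarrow> real" where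
  "rgmjmcmc_accept post qr = (\<lambda>(m, S', mk', m', S, mk). min 1 (a_mh post qr m S' mk' m' S mk))"

lemma rgmjmcmc_swap_swap: "rgmjmcmc_swap (rgmjmcmc_swap t) = t"
  by (auto simp: rgmjmcmc_swap_def split: prod.splits)

lemma rgmjmcmc_accept_nonneg: "0 \<le> rgmjmcmc_accept post qr t"
  by (auto simp: rgmjmcmc_accept_def a_mh_def split: prod.splits)

lemma rgmjmcmc_accept_le_1: "rgmjmcmc_accept post qr t \<le> 1"
  by (auto simp: rgmjmcmc_accept_def split: prod.splits)

lemma pmf_rgmjmcmc_joint:
  "pmf (rgmjmcmc_joint post qS qo qr) (m, S', mk', m', S, mk)
     = pmf post m * pmf (qS m) S' * pmf (qo S' m) mk' * pmf (qr S' mk') m' * pmf (qS m') S * pmf (qo S m') mk"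
  by (simp add: rgmjmcmc_joint_def pmf_bind_Pair)

lemma pmf_rgmjmcmc_joint_mult_accept:
  "pmf (rgmjmcmc_joint post qS qo qr) (m, S', mk', m', S, mk) * rgmjmcmc_accept post qr (m, S', mk', m', S, mk)
     = pmf (qS m) S' * pmf (qo S' m) mk' * pmf (qS m') S * pmf (qo S m') mk
       * min (pmf post m * pmf (qr S' mk') m') (pmf post m' * pmf (qr S mk) m)"
proof -
  let ?P = "pmf post m * pmf (qr S' mk') m'" and ?Q = "pmf post m' * pmf (qr S mk) m"
  have "pmf (rgmjmcmc_joint post qS qo qr) (m, S', mk', m', S, mk) * rgmjmcmc_accept post qr (m, S', mk', m', S, mk)
      = pmf (qS m) S' * pmf (qo S' m) mk' * pmf (qS m') S * pmf (qo S m') mk * (?P * min 1 (?Q / ?P))"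
    unfolding pmf_rgmjmcmc_joint rgmjmcmc_accept_def a_mh_def prod.case by (simp only: mult_ac)
  also have "\<dots> = pmf (qS m) S' * pmf (qo S' m) mk' * pmf (qS m') S * pmf (qo S m') mk * min ?P ?Q"
    by (simp only: mult_min_one_divide pmf_nonneg mult_nonneg_nonneg)
  finally show ?thesis .
qed

lemma rgmjmcmc_detailed_balance:
  "pmf (rgmjmcmc_joint post qS qo qr) t * rgmjmcmc_accept post qr t
     = pmf (rgmjmcmc_joint post qS qo qr) (rgmjmcmc_swap t) * rgmjmcmc_accept post qr (rgmjmcmc_swap t)"
  by (cases t) (simp only: rgmjmcmc_swap_def prod.case pmf_rgmjmcmc_joint_mult_accept, simp add: ac_simps min.commute)

lemma rgmjmcmc_step_eq_accept_reject:
  "rgmjmcmc_step post qS qo qr =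
     map_pmf fst (rgmjmcmc_joint post qS qo qr \<bind> (\<lambda>t.
       map_pmf (\<lambda>b. if b then rgmjmcmc_swap t else t) (bernoulli_pmf (rgmjmcmc_accept post qr t))))"
  unfolding rgmjmcmc_step_def rgmjmcmc_joint_def rgmjmcmc_swap_def rgmjmcmc_accept_def
  by (simp only: map_pmf_def bind_assoc_pmf bind_return_pmf prod.case if_distrib[of fst] fst_conv)

lemma map_fst_rgmjmcmc_joint: "map_pmf fst (rgmjmcmc_joint post qS qo qr) = post"
  by (simp add: rgmjmcmc_joint_def map_bind_pmf pmf.map_comp o_def bind_return_pmf')

theorem theorem2:
  fixes post :: "'m pmf"
    and qS :: "'m \<Rightarrow> 's pmf"
    and qo :: "'s \<Rightarrow> 'm \<Rightarrow> 'm pmf"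
    and qr :: "'s \<Rightarrow> 'm \<Rightarrow> 'm pmf"
  shows "rgmjmcmc_step post qS qo qr = post"
proof -
  have "rgmjmcmc_joint post qS qo qr \<bind> (\<lambda>t.
          map_pmf (\<lambda>b. if b then rgmjmcmc_swap t else t) (bernoulli_pmf (rgmjmcmc_accept post qr t)))
        = rgmjmcmc_joint post qS qo qr"
    by (rule bind_accept_reject_involution[OF rgmjmcmc_swap_swap rgmjmcmc_accept_nonneg
          rgmjmcmc_accept_le_1 rgmjmcmc_detailed_balance])
  then show ?thesis
    by (simp add: rgmjmcmc_step_eq_accept_reject map_fst_rgmjmcmc_joint)
qed

end
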